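(* Let $C$ be a linear $[n,k,d]_q$ code with covering radius $\rho=1$. If $\mathrm{Aut}(C)$ is transitive, then $C$ is completely transitive.
   Context: Covering radius $\rho=\max_{{\bf v}\in\mathbb{F}_q^n}\min_{{\bf x}\in C}d({\bf v},{\bf x})$ (Hamming distance). A linear automorphism of $\mathbb{F}_q^n$ is ${\bf x}\mapsto{\bf x}M$ for an $n\times n$ monomial matrix $M$. $\mathrm{Aut}(C)$ is the group of linear automorphisms leaving $C$ invariant; it is transitive if it acts transitively on the weight-one vectors of $\mathbb{F}_q^n$. $\mathrm{Aut}(C)$ acts on cosets of $C$ by $\phi({\bf v}+C)=\phi({\bf v})+C$, and $C$ is completely transitive if this action has exactly $\rho+1$ orbits. *)

theory Defs
  imports Main
begin

text \<open>Vectors of F_q^n are functions 'n => 'a with 'n a finite index type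
  (n = CARD('n)) and 'a a finite field (q = CARD('a)).
  Matrices are functions 'n => 'n => 'a.\<close>

definition hamming_dist :: "('n::finite \<Rightarrow> 'a) \<Rightarrow> ('n \<Rightarrow> 'a) \<Rightarrow> nat" where
  "hamming_dist v x = card {i. v i \<noteq> x i}"

definition weight :: "('n::finite \<Rightarrow> 'a::zero) \<Rightarrow> nat" where
  "weight v = card {i. v i \<noteq> 0}"

definition linear_code :: "('n::finite \<Rightarrow> 'a::field) set \<Rightarrow> bool" where
  "linear_code C \<longleftrightarrow> (\<lambda>i. 0) \<in> C \<and> (\<forall>x\<in>C. \<forall>y\<in>C. (\<lambda>i. x i + y i) \<in> C)
     \<and> (\<forall>c. \<forall>x\<in>C. (\<lambda>i. c * x i) \<in> C)"

definition covering_radius :: "('n::finite \<Rightarrow> 'a::finite) set \<Rightarrow> nat" where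
  "covering_radius C = Max ((\<lambda>v. Min ((\<lambda>x. hamming_dist v x) ` C)) ` UNIV)"

definition vecmat :: "('n::finite \<Rightarrow> 'a::comm_ring_1) \<Rightarrow> ('n \<Rightarrow> 'n \<Rightarrow> 'a) \<Rightarrow> ('n \<Rightarrow> 'a)" where
  "vecmat x M = (\<lambda>j. \<Sum>i\<in>UNIV. x i * M i j)"

definition monomial_matrix :: "('n::finite \<Rightarrow> 'n \<Rightarrow> 'a::zero) \<Rightarrow> bool" where
  "monomial_matrix M \<longleftrightarrow> (\<forall>i. \<exists>!j. M i j \<noteq> 0) \<and> (\<forall>j. \<exists>!i. M i j \<noteq> 0)"

definition Aut :: "('n::finite \<Rightarrow> 'a::field) set \<Rightarrow> ('n \<Rightarrow> 'n \<Rightarrow> 'a) set" where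
  "Aut C = {M. monomial_matrix M \<and> (\<lambda>x. vecmat x M) ` C = C}"

definition aut_transitive :: "('n::finite \<Rightarrow> 'a::field) set \<Rightarrow> bool" where
  "aut_transitive C \<longleftrightarrow> (\<forall>u v. weight u = 1 \<longrightarrow> weight v = 1 \<longrightarrow>
       (\<exists>M\<in>Aut C. vecmat u M = v))"

definition coset :: "('n::finite \<Rightarrow> 'a::field) set \<Rightarrow> ('n \<Rightarrow> 'a) \<Rightarrow> ('n \<Rightarrow> 'a) set" where
  "coset C v = {(\<lambda>i. v i + c i) | c. c \<in> C}"

definition coset_orbit :: "('n::finite \<Rightarrow> 'a::field) set \<Rightarrow> ('n \<Rightarrow> 'a) \<Rightarrow> ('n \<Rightarrow> 'a) set set" where
  "coset_orbit C v = {coset C (vecmat v M) | M. M \<in> Aut C}"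

definition coset_orbits :: "('n::finite \<Rightarrow> 'a::field) set \<Rightarrow> ('n \<Rightarrow> 'a) set set set" where
  "coset_orbits C = {coset_orbit C v | v. True}"

definition completely_transitive :: "('n::finite \<Rightarrow> 'a::{field,finite}) set \<Rightarrow> bool" where
  "completely_transitive C \<longleftrightarrow> card (coset_orbits C) = covering_radius C + 1"

end

theory Submission
  imports Defs
begin

text \<open>Covering radius 1 means every non-codeword is a codeword plus a weight-one vector, so
  every coset other than C itself contains a weight-one vector. The orbit of a coset depends
  only on the coset, and transitivity on weight-one vectors puts all these cosets into one orbit.
  Hence the cosets fall into exactly the two orbits {C} and the cosets of weight-one vectors,
  i.e. into covering radius + 1 orbits.\<close>

lemma linear_code_zero:
  "linear_code C \<Longrightarrow> (\<lambda>i. 0) \<in> C"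
  unfolding linear_code_def by blast

lemma linear_code_add:
  "linear_code C \<Longrightarrow> x \<in> C \<Longrightarrow> y \<in> C \<Longrightarrow> (\<lambda>i. x i + y i) \<in> C"
  unfolding linear_code_def by blast

lemma linear_code_diff:
  assumes "linear_code C" "x \<in> C" "y \<in> C"
  shows "(\<lambda>i. x i - y i) \<in> C"
proof -
  have "(\<lambda>i. - 1 * y i) \<in> C"
    using assms unfolding linear_code_def by blast
  from linear_code_add[OF assms(1,2) this] show ?thesis by simp
qed

lemma coset_subset:
  assumes "linear_code C" "(\<lambda>i. u i - u' i) \<in> C"
  shows "coset C u \<subseteq> coset C u'"
proof
  fix z assume "z \<in> coset C u"
  then obtain c where c: "c \<in> C" "z = (\<lambda>i. u i + c i)" unfolding coset_def by auto
  have "(\<lambda>i. (u i - u' i) + c i) \<in> C" using linear_code_add[OF assms c(1)] .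
  moreover have "z = (\<lambda>i. u' i + ((u i - u' i) + c i))" using c by auto
  ultimately show "z \<in> coset C u'" unfolding coset_def
    by (intro CollectI exI[of _ "\<lambda>i. (u i - u' i) + c i"]) simp
qed

lemma coset_eq:
  assumes L: "linear_code C" and diff: "(\<lambda>i. u i - u' i) \<in> C"
  shows "coset C u = coset C u'"
proof
  have "(\<lambda>i. u' i - u i) \<in> C"
    using linear_code_diff[OF L linear_code_zero[OF L] diff] by simp
  then show "coset C u' \<subseteq> coset C u" using coset_subset[OF L] by blast
qed (rule coset_subset[OF L diff])

lemma coset_of_mem:
  assumes "linear_code C" "v \<in> C"
  shows "coset C v = C"
proof -
  have "coset C v = coset C (\<lambda>i. 0)" using coset_eq[of C v "\<lambda>i. 0"] assms by simp
  also have "\<dots> = C" unfolding coset_def by auto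
  finally show ?thesis .
qed

lemma mem_coset_self:
  "linear_code C \<Longrightarrow> v \<in> coset C v"
  unfolding coset_def using linear_code_zero by fastforce

lemma coset_eq_code_iff:
  "linear_code C \<Longrightarrow> coset C v = C \<longleftrightarrow> v \<in> C"
  using coset_of_mem mem_coset_self by metis

lemma vecmat_diff:
  "vecmat (\<lambda>i. x i - y i) M = (\<lambda>j. vecmat x M j - vecmat y M j)"
  unfolding vecmat_def left_diff_distrib sum_subtractf ..

lemma vecmat_one:
  "vecmat x (\<lambda>i j. if i = j then 1 else 0) = x"
  unfolding vecmat_def by (simp add: if_distrib cong: if_cong)

lemma one_mem_Aut:
  "(\<lambda>i j. if i = j then 1 else 0) \<in> Aut C"
  unfolding Aut_def monomial_matrix_def by (auto simp: vecmat_one)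

lemma Aut_image:
  "M \<in> Aut C \<Longrightarrow> v \<in> C \<Longrightarrow> vecmat v M \<in> C"
  unfolding Aut_def by blast

lemma weight_eq_1_iff:
  "weight e = 1 \<longleftrightarrow> (\<exists>i0. {i. e i \<noteq> 0} = {i0})"
  unfolding weight_def by (simp add: card_1_singleton_iff)

lemma weight_one_vecmat:
  fixes e :: "'n::finite \<Rightarrow> 'a::field"
  assumes "weight e = 1" and M: "monomial_matrix M"
  shows "weight (vecmat e M) = 1"
proof -
  obtain i0 where i0: "{i. e i \<noteq> 0} = {i0}"
    using assms(1) weight_eq_1_iff by metis
  have "e i = 0" if "i \<noteq> i0" for i using i0 that by blast
  then have "vecmat e M j = e i0 * M i0 j" for j
    unfolding vecmat_def by (subst sum.remove[of _ i0]) auto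
  moreover have "e i0 \<noteq> 0" using i0 by blast
  ultimately have "{j. vecmat e M j \<noteq> 0} = {j. M i0 j \<noteq> 0}" by simp
  moreover have "\<exists>!j. M i0 j \<noteq> 0" using M unfolding monomial_matrix_def by blast
  then obtain j0 where "{j. M i0 j \<noteq> 0} = {j0}" by blast
  ultimately show ?thesis unfolding weight_eq_1_iff by blast
qed

lemma hamming_dist_eq_0_iff:
  "hamming_dist v x = 0 \<longleftrightarrow> v = x"
  unfolding hamming_dist_def by auto

lemma covering_radius_UNIV:
  "covering_radius (UNIV :: ('n::finite \<Rightarrow> 'a::finite) set) = 0"
proof -
  have "Min (range (hamming_dist v)) = 0" for v :: "'n \<Rightarrow> 'a"
  proof (rule Min_eqI)
    show "0 \<in> range (hamming_dist v)" using hamming_dist_eq_0_iff rangeI by metis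
  qed simp_all
  then show ?thesis unfolding covering_radius_def by simp
qed

lemma exists_near_codeword:
  fixes C :: "('n::finite \<Rightarrow> 'a::finite) set"
  assumes "C \<noteq> {}"
  obtains c where "c \<in> C" "hamming_dist v c \<le> covering_radius C"
proof -
  let ?d = "Min ((\<lambda>x. hamming_dist v x) ` C)"
  have "?d \<in> (\<lambda>x. hamming_dist v x) ` C" using assms by (intro Min_in) auto
  moreover have "?d \<le> covering_radius C" unfolding covering_radius_def by (rule Max_ge) auto
  ultimately show thesis using that by auto
qed

lemma covering_radius_one_decomp:
  fixes C :: "('n::finite \<Rightarrow> 'a::{field,finite}) set"
  assumes L: "linear_code C" and r: "covering_radius C = 1" and v: "v \<notin> C"
  obtains c e where "c \<in> C" "weight e = 1" "v = (\<lambda>i. c i + e i)"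
proof -
  have "C \<noteq> {}" using linear_code_zero[OF L] by blast
  then obtain c where c: "c \<in> C" "hamming_dist v c \<le> covering_radius C"
    by (rule exists_near_codeword)
  have "v \<noteq> c" using c(1) v by blast
  then have "hamming_dist v c \<noteq> 0" by (simp add: hamming_dist_eq_0_iff)
  then have "hamming_dist v c = 1" using c(2) r by linarith
  moreover have "{i. v i - c i \<noteq> 0} = {i. v i \<noteq> c i}" by simp
  ultimately have "weight (\<lambda>i. v i - c i) = 1" unfolding weight_def hamming_dist_def by simp
  then show thesis by (rule that[OF c(1)]) simp
qed

lemma coset_orbit_eq:
  assumes L: "linear_code C" and diff: "(\<lambda>i. u i - u' i) \<in> C"
  shows "coset_orbit C u = coset_orbit C u'"
proof -
  have "coset C (vecmat u M) = coset C (vecmat u' M)" if "M \<in> Aut C" for M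
  proof (rule coset_eq[OF L])
    show "(\<lambda>j. vecmat u M j - vecmat u' M j) \<in> C"
      using Aut_image[OF that diff] by (simp only: vecmat_diff)
  qed
  then show ?thesis unfolding coset_orbit_def by (intro Collect_cong) blast
qed

lemma coset_orbit_of_mem:
  assumes "linear_code C" "v \<in> C"
  shows "coset_orbit C v = {C}"
proof -
  have "coset C (vecmat v M) = C" if "M \<in> Aut C" for M
    using coset_of_mem[OF assms(1) Aut_image[OF that assms(2)]] .
  then show ?thesis unfolding coset_orbit_def using one_mem_Aut[of C] by blast
qed

lemma coset_orbit_weight_one:
  assumes "aut_transitive C" and e: "weight e = 1"
  shows "coset_orbit C e = {coset C w | w. weight w = 1}"
proof -
  have "weight (vecmat e M) = 1" if "M \<in> Aut C" for M
    using weight_one_vecmat[OF e] that unfolding Aut_def by blast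
  moreover have "\<exists>M\<in>Aut C. vecmat e M = w" if "weight w = 1" for w
    using assms that unfolding aut_transitive_def by blast
  ultimately show ?thesis unfolding coset_orbit_def by blast
qed

theorem lemma1p5:
  fixes C :: "('n::finite \<Rightarrow> 'a::{field,finite}) set"
  assumes "linear_code C"
    and "covering_radius C = 1"
    and "aut_transitive C"
  shows "completely_transitive C"
proof -
  note L = assms(1)
  define O1 where "O1 = {coset C w | w. weight w = 1}"
  have orbit_cases: "coset_orbit C v = (if v \<in> C then {C} else O1)" for v
  proof (cases "v \<in> C")
    case False
    then obtain c e where ce: "c \<in> C" "weight e = 1" "v = (\<lambda>i. c i + e i)"
      using covering_radius_one_decomp[OF L assms(2)] by metis
    then have "coset_orbit C v = coset_orbit C e" by (intro coset_orbit_eq[OF L]) simp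
    with False show ?thesis using coset_orbit_weight_one[OF assms(3) ce(2)] O1_def by simp
  qed (simp add: coset_orbit_of_mem[OF L])
  have "C \<noteq> UNIV"
    using assms(2) covering_radius_UNIV[where 'n='n and 'a='a] by auto
  then obtain v0 where v0: "v0 \<notin> C" by blast
  then obtain c0 e0 where ce0: "c0 \<in> C" "weight e0 = 1" "v0 = (\<lambda>i. c0 i + e0 i)"
    using covering_radius_one_decomp[OF L assms(2)] by metis
  have "e0 \<notin> C" using v0 ce0 linear_code_add[OF L] by blast
  then have "coset C e0 \<in> O1 - {C}"
    using ce0(2) coset_eq_code_iff[OF L] unfolding O1_def by blast
  then have "{C} \<noteq> O1" by blast
  moreover have "coset_orbits C = {{C}, O1}"
    unfolding coset_orbits_def orbit_cases using linear_code_zero[OF L] v0 by auto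
  ultimately show ?thesis unfolding completely_transitive_def using assms(2) by simp
qed

end
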